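(* Let $\mathrm{Var}$ be a variety of algebras with one binary multiplication defined by multilinear identities. If a multilinear polynomial $f$ in the operations $\cdot,\prec,\succ$ is an identity of all algebras over the operad $\mathrm{Var}\circ\mathrm{GD}^!$ (under the identification described below), then $f$ is a generalized derived identity of $\mathrm{Var}$.
   Context: For an algebra $A$ with derivation $d$, $A^{(d* )}=(A,\cdot,\prec,\succ)$ with $\cdot$ the original product, $x\prec y=x\,d(y)$, $x\succ y=d(x)\,y$; $f$ is a generalized derived identity of $\mathrm{Var}$ if $f=0$ on $A^{(d* )}$ for all $A\in\mathrm{Var}$ and all derivations $d$. The operad $\mathrm{Var}$ has components $\mathrm{Var}(n)$ = multilinear elements of degree $n$ in the free $\mathrm{Var}$-algebra on $x_1,x_2,\dots$. A $\mathrm{GD}^!$-algebra is a vector space with operations $*$, $\star$ such that $*$ is associative and commutative, $(x\star y)\star z-x\star(y\star z)=(x\star z)\star y-x\star(z\star y)$, $x\star(y\star z)=y\star(x\star z)$, $x\star(y*z)=(x\star y)*z$, $x\star(y*z)+y\star(x*z)=(x*y)\star z$; $\mathrm{GD}^!$ is the corresponding operad. The Hadamard product $\mathcal P\otimes\mathcal Q$ of operads has components $\mathcal P(n)\otimes\mathcal Q(n)$ with componentwise composition and symmetric group action; the Manin white product $\mathcal P\circ\mathcal Q$ is the suboperad of $\mathcal P\otimes\mathcal Q$ generated by $\mathcal P(2)\otimes\mathcal Q(2)$. The operations of $\mathrm{Var}\circ\mathrm{GD}^!$ are identified as $x_1\cdot x_2=x_1x_2\otimes(x_1*x_2)$, $x_1\succ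 x_2=x_1x_2\otimes(x_1\star x_2)$, $x_1\prec x_2=x_1x_2\otimes(x_2\star x_1)$. *)

theory Defs
  imports Main "HOL.Vector_Spaces"
begin

text \<open>Binary trees (nonassociative monomials) with internal nodes labelled by
operation symbols and leaves labelled by variable indices (x_i is Leaf i).\<close>
datatype 'o btree = Leaf nat | Node 'o "'o btree" "'o btree"

fun leaves :: "'o btree \<Rightarrow> nat list" where
  "leaves (Leaf i) = [i]"
| "leaves (Node g l r) = leaves l @ leaves r"

fun subst :: "(nat \<Rightarrow> 'o btree) \<Rightarrow> 'o btree \<Rightarrow> 'o btree" where
  "subst w (Leaf i) = w i"
| "subst w (Node g l r) = Node g (subst w l) (subst w r)"

text \<open>A polynomial is a finitely supported coefficient function on monomials.\<close>
definition multilin :: "nat \<Rightarrow> ('o btree \<Rightarrow> 'k::zero) \<Rightarrow> bool" where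
  "multilin n p \<longleftrightarrow> finite {t. p t \<noteq> 0} \<and>
     (\<forall>t. p t \<noteq> 0 \<longrightarrow> distinct (leaves t) \<and> set (leaves t) = {0..<n})"

fun eval :: "('o \<Rightarrow> 'a \<Rightarrow> 'a \<Rightarrow> 'a) \<Rightarrow> (nat \<Rightarrow> 'a) \<Rightarrow> 'o btree \<Rightarrow> 'a" where
  "eval ops a (Leaf i) = a i"
| "eval ops a (Node g l r) = ops g (eval ops a l) (eval ops a r)"

definition evalp :: "('k::zero \<Rightarrow> 'a \<Rightarrow> 'a::comm_monoid_add) \<Rightarrow> ('o \<Rightarrow> 'a \<Rightarrow> 'a \<Rightarrow> 'a)
    \<Rightarrow> (nat \<Rightarrow> 'a) \<Rightarrow> ('o btree \<Rightarrow> 'k) \<Rightarrow> 'a" where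
  "evalp sc ops a p = (\<Sum>t\<in>{t. p t \<noteq> 0}. sc (p t) (eval ops a t))"

definition lin :: "('k::comm_monoid_add \<times> 'o btree) list \<Rightarrow> 'o btree \<Rightarrow> 'k" where
  "lin l = (\<lambda>t. sum_list (map fst (filter (\<lambda>(c,s). s = t) l)))"

definition pmap :: "('b \<Rightarrow> 'c) \<Rightarrow> ('b \<Rightarrow> 'k::comm_monoid_add) \<Rightarrow> 'c \<Rightarrow> 'k" where
  "pmap g p = (\<lambda>t. \<Sum>s\<in>{s. p s \<noteq> 0 \<and> g s = t}. p s)"

inductive_set lspan :: "('b \<Rightarrow> 'k::comm_ring_1) set \<Rightarrow> ('b \<Rightarrow> 'k) set" for B where
  zero: "(\<lambda>_. 0) \<in> lspan B"
| step: "b \<in> B \<Longrightarrow> v \<in> lspan B \<Longrightarrow> (\<lambda>x. c * b x + v x) \<in> lspan B"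

definition is_algebra :: "('k::field \<Rightarrow> 'a::ab_group_add \<Rightarrow> 'a) \<Rightarrow> ('a \<Rightarrow> 'a \<Rightarrow> 'a) \<Rightarrow> bool" where
  "is_algebra sc m \<longleftrightarrow> vector_space sc \<and>
     (\<forall>x y z. m (x + y) z = m x z + m y z \<and> m x (y + z) = m x y + m x z) \<and>
     (\<forall>c x y. m (sc c x) y = sc c (m x y) \<and> m x (sc c y) = sc c (m x y))"

definition in_variety :: "(unit btree \<Rightarrow> 'k) set \<Rightarrow> ('k::field \<Rightarrow> 'a::ab_group_add \<Rightarrow> 'a)
    \<Rightarrow> ('a \<Rightarrow> 'a \<Rightarrow> 'a) \<Rightarrow> bool" where
  "in_variety S sc m \<longleftrightarrow> is_algebra sc m \<and> (\<forall>p\<in>S. \<forall>a. evalp sc (\<lambda>_. m) a p = 0)"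

definition is_derivation :: "('k::field \<Rightarrow> 'a::ab_group_add \<Rightarrow> 'a) \<Rightarrow> ('a \<Rightarrow> 'a \<Rightarrow> 'a)
    \<Rightarrow> ('a \<Rightarrow> 'a) \<Rightarrow> bool" where
  "is_derivation sc m d \<longleftrightarrow>
     (\<forall>x y. d (x + y) = d x + d y) \<and> (\<forall>c x. d (sc c x) = sc c (d x)) \<and>
     (\<forall>x y. d (m x y) = m (d x) y + m x (d y))"

datatype op3 = Dot | Prec | Succ

fun dstar_ops :: "('a \<Rightarrow> 'a \<Rightarrow> 'a) \<Rightarrow> ('a \<Rightarrow> 'a) \<Rightarrow> op3 \<Rightarrow> 'a \<Rightarrow> 'a \<Rightarrow> 'a" where
  "dstar_ops m d Dot x y = m x y"
| "dstar_ops m d Prec x y = m x (d y)"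
| "dstar_ops m d Succ x y = m (d x) y"

text \<open>f is a generalized derived identity of Var (the variety given by S) if f
vanishes on A^(d*) for all A in Var and all derivations d.  Since the
carrier type is arbitrary, this is stated in the main theorem by quantifying
over a free type variable.\<close>

text \<open>GStar is the operation * (commutative associative), Star is the operation \<star>.\<close>
datatype gdop = GStar | Star

abbreviation (input) xv :: "nat \<Rightarrow> 'o btree" where "xv i \<equiv> Leaf i"

definition gd_rels :: "(gdop btree \<Rightarrow> 'k::comm_ring_1) set" where
  "gd_rels = {
     lin [(1, Node GStar (xv 0) (xv 1)), (-1, Node GStar (xv 1) (xv 0))],
     lin [(1, Node GStar (Node GStar (xv 0) (xv 1)) (xv 2)),
          (-1, Node GStar (xv 0) (Node GStar (xv 1) (xv 2)))],
     lin [(1, Node Star (Node Star (xv 0) (xv 1)) (xv 2)),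
          (-1, Node Star (xv 0) (Node Star (xv 1) (xv 2))),
          (-1, Node Star (Node Star (xv 0) (xv 2)) (xv 1)),
          (1, Node Star (xv 0) (Node Star (xv 2) (xv 1)))],
     lin [(1, Node Star (xv 0) (Node Star (xv 1) (xv 2))),
          (-1, Node Star (xv 1) (Node Star (xv 0) (xv 2)))],
     lin [(1, Node Star (xv 0) (Node GStar (xv 1) (xv 2))),
          (-1, Node GStar (Node Star (xv 0) (xv 1)) (xv 2))],
     lin [(1, Node Star (xv 0) (Node GStar (xv 1) (xv 2))),
          (1, Node Star (xv 1) (Node GStar (xv 0) (xv 2))),
          (-1, Node Star (Node GStar (xv 0) (xv 1)) (xv 2))]}"

text \<open>The consequences of a set P of identities: images of an identity p under
a substitution of monomials w for the variables, placed into a context c at the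
unique occurrence of the variable h.  Their span is the T-ideal generated by P,
and P(n) (the multilinear part of the free algebra) is the space of multilinear
degree-n polynomials modulo (the degree n part of) this span.\<close>
definition consq :: "('o btree \<Rightarrow> 'k::comm_monoid_add) set \<Rightarrow> ('o btree \<Rightarrow> 'k) set" where
  "consq P = {pmap (\<lambda>s. subst (\<lambda>i. if i = h then subst w s else Leaf i) c) p
              | p w c h. p \<in> P \<and> length (filter (\<lambda>i. i = h) (leaves c)) = 1}"

definition delta :: "'b \<Rightarrow> 'b \<Rightarrow> 'k::zero_neq_one" where
  "delta w = (\<lambda>t. if t = w then 1 else 0)"

definition tens :: "('b \<Rightarrow> 'k::times) \<Rightarrow> ('c \<Rightarrow> 'k) \<Rightarrow> ('b \<times> 'c) \<Rightarrow> 'k" where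
  "tens r s = (\<lambda>(u, v). r u * s v)"

text \<open>Kernel of the map  (free space on Var-monomials) \<otimes> (free space on
GD^!-monomials) \<rightarrow> Var(n) \<otimes> GD^!(n), i.e. R_Var \<otimes> M + M \<otimes> R_GD.\<close>
definition hadamard_kernel :: "(unit btree \<Rightarrow> 'k::field) set \<Rightarrow> ((unit btree \<times> gdop btree) \<Rightarrow> 'k) set" where
  "hadamard_kernel S = lspan ({tens r (delta w) | r w. r \<in> consq S}
                             \<union> {tens (delta w) r | r w. r \<in> consq gd_rels})"

text \<open>The identification of cdot, prec, succ with elements of Var(2) \<otimes> GD^!(2):
 x1 . x2 = x1x2 \<otimes> (x1 * x2),  x1 \<succ> x2 = x1x2 \<otimes> (x1 \<star> x2),
 x1 \<prec> x2 = x1x2 \<otimes> (x2 \<star> x1), extended to monomials by componentwise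
composition.\<close>
fun var_part :: "op3 btree \<Rightarrow> unit btree" where
  "var_part (Leaf i) = Leaf i"
| "var_part (Node g l r) = Node () (var_part l) (var_part r)"

fun gd_part :: "op3 btree \<Rightarrow> gdop btree" where
  "gd_part (Leaf i) = Leaf i"
| "gd_part (Node Dot l r) = Node GStar (gd_part l) (gd_part r)"
| "gd_part (Node Succ l r) = Node Star (gd_part l) (gd_part r)"
| "gd_part (Node Prec l r) = Node Star (gd_part r) (gd_part l)"

text \<open>f is an identity of all algebras over Var \<circ> GD^! iff its image in the
component (Var \<circ> GD^!)(n) \<subseteq> Var(n) \<otimes> GD^!(n) is zero.\<close>
definition white_identity :: "(unit btree \<Rightarrow> 'k::field) set \<Rightarrow> (op3 btree \<Rightarrow> 'k) \<Rightarrow> bool" where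
  "white_identity S f \<longleftrightarrow>
     pmap (\<lambda>t. (var_part t, gd_part t)) f \<in> hadamard_kernel S"

end

theory Submission
  imports Defs "HOL-Library.Function_Algebras"
begin

(*
  The operad GD^! acts on every commutative algebra with a derivation ': the operations
  x * y = xy and x \<star> y = x' y satisfy its defining identities.  We use the multilinear part
  of the free such algebra, spanned by monomials in which each variable x_i occurs at most once,
  carrying k_i derivatives.  Given A in Var with a derivation d and values a : nat => A, pair a
  Var-monomial u with an element F of this model by

    Phi(u, F) = sum_sigma F(sigma) u(d^sigma a),   d^sigma a substituting d^(k_i)(a_i) for x_i.

  Phi kills the consequences of the identities of Var in its first argument, since A lies in
  Var, and those of GD^! in its second, since the model satisfies them; hence it kills the
  kernel of the projection onto Var(n) \<otimes> GD^!(n).  On the image of a monomial t in cdot, prec,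
  succ it returns the value of t under x prec y = x d(y), x succ y = d(x) y: products of
  monomials in disjoint variables match the multiplication of A, and the derivation of the
  model matches d by the Leibniz rule.  So the value of f is Phi of the image of f, which is 0.
*)

definition lin_ext :: "('k::zero \<Rightarrow> 'a \<Rightarrow> 'a::comm_monoid_add) \<Rightarrow> ('b \<Rightarrow> 'a) \<Rightarrow> ('b \<Rightarrow> 'k) \<Rightarrow> 'a" where
  "lin_ext s h p = (\<Sum>t\<in>{t. p t \<noteq> 0}. s (p t) (h t))"

lemma evalp_eq_lin_ext: "evalp s ops a p = lin_ext s (eval ops a) p"
  by (simp add: evalp_def lin_ext_def)

lemma finite_support_pmap:
  "finite {s. p s \<noteq> 0} \<Longrightarrow> finite {t. pmap g p t \<noteq> (0::'k::comm_monoid_add)}"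
proof (rule finite_subset[OF _ finite_imageI])
  show "{t. pmap g p t \<noteq> 0} \<subseteq> g ` {s. p s \<noteq> 0}"
    unfolding pmap_def by (force elim: sum.not_neutral_contains_not_neutral)
qed

lemma finite_support_lin: "finite {t. lin l t \<noteq> 0}"
proof (rule finite_subset[OF _ finite_imageI[OF finite_set]])
  show "{t. lin l t \<noteq> 0} \<subseteq> snd ` set l"
  proof
    fix t assume "t \<in> {t. lin l t \<noteq> 0}"
    then have "filter (\<lambda>(c, s). s = t) l \<noteq> []" by (auto simp: lin_def)
    then show "t \<in> snd ` set l" by (force simp: filter_empty_conv)
  qed
qed

lemma finite_support_consq:
  assumes "\<And>p. p \<in> P \<Longrightarrow> finite {t. p t \<noteq> 0}" and "r \<in> consq P"
  shows "finite {t. r t \<noteq> 0}"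
  using assms unfolding consq_def by (auto intro: finite_support_pmap)

lemma finite_support_tens:
  assumes "finite {u. r u \<noteq> 0}" "finite {v. s v \<noteq> 0}"
  shows "finite {x. tens r s x \<noteq> (0::'k::mult_zero)}"
  by (rule finite_subset[of _ "{u. r u \<noteq> 0} \<times> {v. s v \<noteq> 0}"]) (use assms in \<open>auto simp: tens_def\<close>)

lemma finite_support_delta: "finite {t. delta w t \<noteq> 0}"
  by (simp add: delta_def)

lemma sum_fun_apply: "(\<Sum>x\<in>A. f x) y = (\<Sum>x\<in>A. f x y)"
  by (induction A rule: infinite_finite_induct) auto

lemma module_hom_lin_ext:
  assumes "module_hom s1 s2 \<phi>"
  shows "\<phi> (lin_ext s1 h p) = lin_ext s2 (\<lambda>t. \<phi> (h t)) p"
  unfolding lin_ext_def module_hom.sum[OF assms] module_hom.scale[OF assms] ..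

context module
begin

lemma lin_ext_superset:
  assumes "finite T" "{t. p t \<noteq> 0} \<subseteq> T"
  shows "lin_ext scale h p = (\<Sum>t\<in>T. scale (p t) (h t))"
  unfolding lin_ext_def by (rule sum.mono_neutral_left) (use assms in auto)

lemma lin_ext_cong: "(\<And>t. p t \<noteq> 0 \<Longrightarrow> h t = h' t) \<Longrightarrow> lin_ext scale h p = lin_ext scale h' p"
  unfolding lin_ext_def by (rule sum.cong) auto

lemma lin_ext_add:
  assumes "finite {t. p t \<noteq> 0}" "finite {t. q t \<noteq> 0}"
  shows "lin_ext scale h (\<lambda>t. p t + q t) = lin_ext scale h p + lin_ext scale h q"
proof -
  let ?T = "{t. p t \<noteq> 0} \<union> {t. q t \<noteq> 0}"
  have "finite ?T" using assms by simp
  then show ?thesis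
    by (subst (1 2 3) lin_ext_superset[of ?T]) (auto simp: scale_left_distrib sum.distrib)
qed

lemma lin_ext_scale:
  assumes "finite {t. p t \<noteq> 0}"
  shows "lin_ext scale h (\<lambda>t. c * p t) = scale c (lin_ext scale h p)"
  by (subst (1 2) lin_ext_superset[OF assms]) (auto simp: scale_sum_right)

lemma lin_ext_pmap:
  assumes "finite {s. p s \<noteq> 0}"
  shows "lin_ext scale h (pmap g p) = lin_ext scale (\<lambda>s. h (g s)) p"
proof -
  let ?P = "{s. p s \<noteq> 0}"
  have "lin_ext scale h (pmap g p) = (\<Sum>t\<in>g ` ?P. scale (pmap g p t) (h t))"
    by (rule lin_ext_superset) (use assms in \<open>auto simp: pmap_def elim: sum.not_neutral_contains_not_neutral\<close>)
  also have "\<dots> = (\<Sum>t\<in>g ` ?P. \<Sum>s\<in>{s\<in>?P. g s = t}. scale (p s) (h (g s)))"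
    by (rule sum.cong) (auto simp: pmap_def scale_sum_left intro: sum.cong)
  also have "\<dots> = lin_ext scale (\<lambda>s. h (g s)) p"
    unfolding lin_ext_def by (rule sum.image_gen[symmetric]) (fact assms)
  finally show ?thesis .
qed

lemma lin_ext_lin: "lin_ext scale h (lin l) = (\<Sum>(c, t)\<leftarrow>l. scale c (h t))"
proof (induction l)
  case Nil
  then show ?case by (simp add: lin_def lin_ext_def)
next
  case (Cons ct l)
  obtain c t where ct: "ct = (c, t)" by force
  have single: "lin_ext scale h (\<lambda>s. if s = t then c else 0) = scale c (h t)"
    by (subst lin_ext_superset[of "{t}"]) auto
  have fin: "finite {s. (if s = t then c else 0) \<noteq> 0}"
    by (rule finite_subset[of _ "{t}"]) auto
  have "lin (ct # l) = (\<lambda>s. (if s = t then c else 0) + lin l s)"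
    by (auto simp: lin_def ct)
  then have "lin_ext scale h (lin (ct # l)) = scale c (h t) + lin_ext scale h (lin l)"
    using lin_ext_add[OF fin finite_support_lin] single by simp
  then show ?case using Cons.IH by (simp add: ct)
qed

lemma lin_ext_tens_delta_right:
  assumes "finite {u. r u \<noteq> 0}"
  shows "lin_ext scale h (tens r (delta w)) = lin_ext scale (\<lambda>u. h (u, w)) r"
proof -
  have "lin_ext scale h (tens r (delta w)) = (\<Sum>x\<in>{u. r u \<noteq> 0} \<times> {w}. scale (tens r (delta w) x) (h x))"
    by (rule lin_ext_superset) (use assms in \<open>auto simp: tens_def delta_def split: if_splits\<close>)
  also have "\<dots> = lin_ext scale (\<lambda>u. h (u, w)) r"
    unfolding lin_ext_def by (simp add: sum.cartesian_product' tens_def delta_def)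
  finally show ?thesis .
qed

lemma lin_ext_tens_delta_left:
  assumes "finite {v. r v \<noteq> 0}"
  shows "lin_ext scale h (tens (delta w) r) = lin_ext scale (\<lambda>v. h (w, v)) r"
proof -
  have "lin_ext scale h (tens (delta w) r) = (\<Sum>x\<in>{w} \<times> {v. r v \<noteq> 0}. scale (tens (delta w) r x) (h x))"
    by (rule lin_ext_superset) (use assms in \<open>auto simp: tens_def delta_def split: if_splits\<close>)
  also have "\<dots> = lin_ext scale (\<lambda>v. h (w, v)) r"
    unfolding lin_ext_def by (simp add: sum.cartesian_product' tens_def delta_def)
  finally show ?thesis .
qed

lemma lin_ext_lspan_eq_0:
  assumes "\<And>b. b \<in> B \<Longrightarrow> finite {t. b t \<noteq> 0} \<and> lin_ext scale h b = 0"
    and "Q \<in> lspan B"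
  shows "finite {t. Q t \<noteq> 0} \<and> lin_ext scale h Q = 0"
  using assms(2)
proof (induction Q rule: lspan.induct)
  case zero
  then show ?case by (simp add: lin_ext_def)
next
  case (step b v c)
  have b: "finite {t. b t \<noteq> 0}" "lin_ext scale h b = 0" using assms(1)[OF step(1)] by blast+
  have cb: "finite {t. c * b t \<noteq> 0}" by (rule finite_subset[OF _ b(1)]) auto
  have "{t. c * b t + v t \<noteq> 0} \<subseteq> {t. b t \<noteq> 0} \<union> {t. v t \<noteq> 0}" by auto
  then have "finite {t. c * b t + v t \<noteq> 0}" using b(1) step.IH by (auto intro: finite_subset)
  then show ?case
    using lin_ext_add[OF cb, of v h] lin_ext_scale[OF b(1), of h c] b(2) step.IH by simp
qed

lemma lin_ext_swap:
  "lin_ext scale (\<lambda>u. lin_ext scale (H u) F) r = lin_ext scale (\<lambda>\<sigma>. lin_ext scale (\<lambda>u. H u \<sigma>) r) F"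
  unfolding lin_ext_def scale_sum_right
  by (subst sum.swap) (simp add: scale_left_commute mult.commute)

lemma lin_ext_lin_ext_coeffs:
  assumes fin: "finite {v. r v \<noteq> 0}" and finG: "\<And>v. finite {\<sigma>. G v \<sigma> \<noteq> 0}"
  shows "lin_ext scale (\<lambda>v. lin_ext scale h (G v)) r =
    lin_ext scale h (\<lambda>\<sigma>. \<Sum>v | r v \<noteq> 0. r v * G v \<sigma>)"
proof -
  let ?V = "{v. r v \<noteq> 0}"
  let ?T = "\<Union>v\<in>?V. {\<sigma>. G v \<sigma> \<noteq> 0}"
  have finT: "finite ?T" using fin finG by blast
  have inner: "lin_ext scale h (G v) = (\<Sum>\<sigma>\<in>?T. scale (G v \<sigma>) (h \<sigma>))" if "r v \<noteq> 0" for v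
    using that by (intro lin_ext_superset[OF finT]) auto
  have "lin_ext scale (\<lambda>v. lin_ext scale h (G v)) r = (\<Sum>v\<in>?V. scale (r v) (\<Sum>\<sigma>\<in>?T. scale (G v \<sigma>) (h \<sigma>)))"
    by (simp add: lin_ext_def[of scale "\<lambda>v. lin_ext scale h (G v)" r] inner)
  also have "\<dots> = (\<Sum>\<sigma>\<in>?T. scale (\<Sum>v\<in>?V. r v * G v \<sigma>) (h \<sigma>))"
    by (simp add: scale_sum_right scale_sum_left sum.swap[of _ ?V])
  also have "\<dots> = lin_ext scale h (\<lambda>\<sigma>. \<Sum>v | r v \<noteq> 0. r v * G v \<sigma>)"
    by (rule lin_ext_superset[symmetric, OF finT])
      (force elim: sum.not_neutral_contains_not_neutral)
  finally show ?thesis .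
qed

end

section \<open>Consequences of identities\<close>

definition bilinear_op :: "('k::comm_ring_1 \<Rightarrow> 'a::ab_group_add \<Rightarrow> 'a) \<Rightarrow> ('a \<Rightarrow> 'a \<Rightarrow> 'a) \<Rightarrow> bool" where
  "bilinear_op s f \<longleftrightarrow> (\<forall>x. module_hom s s (f x)) \<and> (\<forall>y. module_hom s s (\<lambda>x. f x y))"

lemma eval_subst: "eval ops b (subst w t) = eval ops (\<lambda>i. eval ops b (w i)) t"
  by (induction t) auto

lemma eval_cong_leaves:
  "(\<And>i. i \<in> set (leaves c) \<Longrightarrow> b i = b' i) \<Longrightarrow> eval ops b c = eval ops b' c"
  by (induction c) auto

lemma eval_upd_notin: "h \<notin> set (leaves c) \<Longrightarrow> eval ops (b(h := y)) c = eval ops b c"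
  by (rule eval_cong_leaves) auto

context module
begin

lemma module_hom_eval_unique_leaf:
  assumes ops: "\<And>g. bilinear_op scale (ops g)"
    and "length (filter (\<lambda>i. i = h) (leaves c)) = 1"
  shows "module_hom scale scale (\<lambda>y. eval ops (b(h := y)) c)"
  using assms(2)
proof (induction c)
  case (Leaf i)
  then show ?case by (cases "i = h") (simp_all add: module_hom_ident)
next
  case (Node g l r)
  have "length (filter (\<lambda>i. i = h) (leaves l)) + length (filter (\<lambda>i. i = h) (leaves r)) = 1"
    using Node.prems by simp
  then consider
      "length (filter (\<lambda>i. i = h) (leaves l)) = 1" "h \<notin> set (leaves r)"
    | "length (filter (\<lambda>i. i = h) (leaves r)) = 1" "h \<notin> set (leaves l)"
    by (cases "length (filter (\<lambda>i. i = h) (leaves l))") (auto simp: filter_empty_conv)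
  then show ?case
  proof cases
    case 1
    have "module_hom scale scale ((\<lambda>x. ops g x (eval ops b r)) \<circ> (\<lambda>y. eval ops (b(h := y)) l))"
      using module_hom_compose Node.IH(1)[OF 1(1)] ops unfolding bilinear_op_def by blast
    then show ?thesis by (simp only: o_def eval.simps eval_upd_notin[OF 1(2)])
  next
    case 2
    have "module_hom scale scale (ops g (eval ops b l) \<circ> (\<lambda>y. eval ops (b(h := y)) r))"
      using module_hom_compose Node.IH(2)[OF 2(1)] ops unfolding bilinear_op_def by blast
    then show ?thesis by (simp only: o_def eval.simps eval_upd_notin[OF 2(2)])
  qed
qed

lemma evalp_consq_eq_0:
  assumes ops: "\<And>g. bilinear_op scale (ops g)"
    and r: "r \<in> consq P"
    and fin: "\<And>p. p \<in> P \<Longrightarrow> finite {t. p t \<noteq> 0}"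
    and holds: "\<And>p b. p \<in> P \<Longrightarrow> evalp scale ops b p = 0"
  shows "evalp scale ops b r = 0"
proof -
  obtain p w c h where r: "r = pmap (\<lambda>s. subst (\<lambda>i. if i = h then subst w s else Leaf i) c) p"
    and p: "p \<in> P" and h: "length (filter (\<lambda>i. i = h) (leaves c)) = 1"
    using r unfolding consq_def by blast
  define \<phi> where "\<phi> y = eval ops (b(h := y)) c" for y
  have \<phi>: "module_hom scale scale \<phi>"
    unfolding \<phi>_def by (rule module_hom_eval_unique_leaf[OF ops h])
  have "evalp scale ops b r = lin_ext scale (\<lambda>s. \<phi> (eval ops b (subst w s))) p"
  proof -
    have "(\<lambda>i. eval ops b (if i = h then subst w s else Leaf i)) = b(h := eval ops b (subst w s))" for s
      by auto
    then show ?thesis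
      unfolding evalp_eq_lin_ext r lin_ext_pmap[OF fin[OF p]] \<phi>_def by (simp add: eval_subst)
  qed
  also have "\<dots> = \<phi> (evalp scale ops (\<lambda>i. eval ops b (w i)) p)"
    unfolding module_hom_lin_ext[OF \<phi>] evalp_eq_lin_ext by (simp add: eval_subst)
  also have "\<dots> = 0"
    using holds[OF p] module_hom.zero[OF \<phi>] by simp
  finally show ?thesis .
qed

end

section \<open>Multilinear elements of the free differential commutative algebra\<close>

text \<open>A finite partial map \<open>\<sigma>\<close> encodes the monomial in which \<open>x\<^sub>i\<close>, for \<open>i \<in> dom \<sigma>\<close>,
carries \<open>the (\<sigma> i)\<close> derivatives; a function \<open>dmon \<Rightarrow> 'k\<close> is the coefficient vector of an
element.  \<open>dmul\<close> is the product restricted to the multilinear part, \<open>dder\<close> the derivation.\<close>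

type_synonym dmon = "nat \<rightharpoonup> nat"

definition dmul :: "(dmon \<Rightarrow> 'k::comm_ring_1) \<Rightarrow> (dmon \<Rightarrow> 'k) \<Rightarrow> dmon \<Rightarrow> 'k" where
  "dmul F G = (\<lambda>\<sigma>. \<Sum>A\<in>Pow (dom \<sigma>). F (\<sigma> |` A) * G (\<sigma> |` (dom \<sigma> - A)))"

definition dder :: "(dmon \<Rightarrow> 'k::comm_ring_1) \<Rightarrow> dmon \<Rightarrow> 'k" where
  "dder F = (\<lambda>\<sigma>. \<Sum>i\<in>dom \<sigma>. if \<sigma> i = Some 0 then 0 else F (\<sigma>(i \<mapsto> the (\<sigma> i) - 1)))"

definition dscale :: "'k::comm_ring_1 \<Rightarrow> (dmon \<Rightarrow> 'k) \<Rightarrow> dmon \<Rightarrow> 'k" where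
  "dscale c F = (\<lambda>\<sigma>. c * F \<sigma>)"

lemma module_dscale: "module dscale"
  by unfold_locales (auto simp: dscale_def fun_eq_iff algebra_simps)

lemma dmul_infinite: "infinite (dom \<sigma>) \<Longrightarrow> dmul F G \<sigma> = 0"
  by (simp add: dmul_def)

lemma dmul_commute: "dmul F G = dmul G F"
proof (rule ext)
  fix \<sigma> :: dmon
  show "dmul F G \<sigma> = dmul G F \<sigma>"
    unfolding dmul_def
    by (rule sum.reindex_bij_witness[where i="\<lambda>A. dom \<sigma> - A" and j="\<lambda>A. dom \<sigma> - A"])
      (auto simp: double_diff mult.commute)
qed

lemma dmul_assoc: "dmul (dmul F G) H = dmul F (dmul G H)"
proof (rule ext)
  fix \<sigma> :: dmon
  define D where "D = dom \<sigma>"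
  show "dmul (dmul F G) H \<sigma> = dmul F (dmul G H) \<sigma>"
  proof (cases "finite D")
    case False
    then show ?thesis by (simp add: dmul_infinite D_def)
  next
    case fin: True
    have dd: "\<And>A B. B \<subseteq> A \<Longrightarrow> D - B - (A - B) = D - A" by auto
    have "dmul (dmul F G) H \<sigma> =
        (\<Sum>A\<in>Pow D. \<Sum>B\<in>Pow A. F (\<sigma> |` B) * G (\<sigma> |` (A - B)) * H (\<sigma> |` (D - A)))"
      unfolding dmul_def D_def[symmetric]
    proof (rule sum.cong[OF refl])
      fix A assume "A \<in> Pow D"
      then have "D \<inter> A = A" "\<And>B. B \<in> Pow A \<Longrightarrow> A \<inter> B = B \<and> A \<inter> (A - B) = A - B" by auto
      then show "(\<Sum>B\<in>Pow (dom (\<sigma> |` A)). F (\<sigma> |` A |` B) * G (\<sigma> |` A |` (dom (\<sigma> |` A) - B)))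
          * H (\<sigma> |` (D - A)) = (\<Sum>B\<in>Pow A. F (\<sigma> |` B) * G (\<sigma> |` (A - B)) * H (\<sigma> |` (D - A)))"
        by (auto simp: D_def[symmetric] sum_distrib_right intro!: sum.cong)
    qed
    also have "\<dots> = (\<Sum>(A, B)\<in>Sigma (Pow D) Pow. F (\<sigma> |` B) * G (\<sigma> |` (A - B)) * H (\<sigma> |` (D - A)))"
      by (rule sum.Sigma) (use fin in \<open>auto intro: finite_subset\<close>)
    also have "\<dots> = (\<Sum>(B, C)\<in>Sigma (Pow D) (\<lambda>B. Pow (D - B)).
        F (\<sigma> |` B) * G (\<sigma> |` C) * H (\<sigma> |` (D - B - C)))"
      by (rule sum.reindex_bij_witness[where i="\<lambda>(B, C). (B \<union> C, B)" and j="\<lambda>(A, B). (B, A - B)"])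
        (auto simp: Diff_Un Int_commute dd)
    also have "\<dots> = (\<Sum>B\<in>Pow D. \<Sum>C\<in>Pow (D - B). F (\<sigma> |` B) * G (\<sigma> |` C) * H (\<sigma> |` (D - B - C)))"
      by (rule sum.Sigma[symmetric]) (use fin in auto)
    also have "\<dots> = dmul F (dmul G H) \<sigma>"
      unfolding dmul_def D_def[symmetric]
    proof (rule sum.cong[OF refl])
      fix B assume "B \<in> Pow D"
      have "D \<inter> (D - B) = D - B"
        "\<And>C. C \<in> Pow (D - B) \<Longrightarrow> (D - B) \<inter> C = C \<and> (D - B) \<inter> (D - B - C) = D - B - C" by auto
      then show "(\<Sum>C\<in>Pow (D - B). F (\<sigma> |` B) * G (\<sigma> |` C) * H (\<sigma> |` (D - B - C))) =
          F (\<sigma> |` B) * (\<Sum>C\<in>Pow (dom (\<sigma> |` (D - B))).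
            G (\<sigma> |` (D - B) |` C) * H (\<sigma> |` (D - B) |` (dom (\<sigma> |` (D - B)) - C)))"
        by (auto simp: D_def[symmetric] sum_distrib_left mult.assoc intro!: sum.cong)
    qed
    finally show ?thesis .
  qed
qed

lemma dmul_left_commute: "dmul F (dmul G H) = dmul G (dmul F H)"
  by (metis dmul_assoc dmul_commute)

lemma dmul_add_left: "dmul (F + G) H = dmul F H + dmul G H"
  by (auto simp: dmul_def fun_eq_iff distrib_right sum.distrib)

lemma dmul_add_right: "dmul H (F + G) = dmul H F + dmul H G"
  by (auto simp: dmul_def fun_eq_iff distrib_left sum.distrib)

lemma dmul_scale_left: "dmul (dscale c F) G = dscale c (dmul F G)"
  by (auto simp: dmul_def dscale_def fun_eq_iff sum_distrib_left mult.assoc)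

lemma dmul_scale_right: "dmul G (dscale c F) = dscale c (dmul G F)"
  by (auto simp: dmul_def dscale_def fun_eq_iff sum_distrib_left mult.left_commute)

lemma dder_add: "dder (F + G) = dder F + dder G"
  by (auto simp: dder_def fun_eq_iff sum.distrib[symmetric] intro!: sum.cong)

lemma dder_scale: "dder (dscale c F) = dscale c (dder F)"
  by (auto simp: dder_def dscale_def fun_eq_iff sum_distrib_left intro!: sum.cong)

lemma restrict_map_upd_in: "i \<in> A \<Longrightarrow> (\<sigma>(i \<mapsto> v)) |` A = (\<sigma> |` A)(i \<mapsto> v)"
  by (auto simp: restrict_map_def fun_eq_iff)

lemma restrict_map_upd_notin: "i \<notin> A \<Longrightarrow> (\<sigma>(i \<mapsto> v)) |` A = \<sigma> |` A"
  by (auto simp: restrict_map_def fun_eq_iff)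

lemma dder_dmul: "dder (dmul F G) = dmul (dder F) G + dmul F (dder G)"
proof (rule ext)
  fix \<sigma> :: dmon
  define D where "D = dom \<sigma>"
  define T where "T i A = (if \<sigma> i = Some 0 then 0 else
     F (\<sigma>(i \<mapsto> the (\<sigma> i) - 1) |` A) * G (\<sigma>(i \<mapsto> the (\<sigma> i) - 1) |` (D - A)))" for i A
  have "dder (dmul F G) \<sigma> = (\<Sum>i\<in>D. \<Sum>A\<in>Pow D. T i A)"
    unfolding dder_def D_def[symmetric]
  proof (rule sum.cong[OF refl])
    fix i assume "i \<in> D"
    then have "dom (\<sigma>(i \<mapsto> v)) = D" for v unfolding D_def by auto
    then show "(if \<sigma> i = Some 0 then 0 else dmul F G (\<sigma>(i \<mapsto> the (\<sigma> i) - 1))) = (\<Sum>A\<in>Pow D. T i A)"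
      unfolding T_def dmul_def by auto
  qed
  also have "\<dots> = (\<Sum>A\<in>Pow D. \<Sum>i\<in>D. T i A)" by (rule sum.swap)
  also have "\<dots> = (dmul (dder F) G + dmul F (dder G)) \<sigma>"
  proof (cases "finite D")
    case False
    then show ?thesis by (simp add: dmul_infinite D_def)
  next
    case fin: True
    show ?thesis
      unfolding plus_fun_apply dmul_def D_def[symmetric] sum.distrib[symmetric]
    proof (rule sum.cong[OF refl])
      fix A assume "A \<in> Pow D"
      then have AD: "A \<subseteq> D" by auto
      then have "dom (\<sigma> |` A) = A" "dom (\<sigma> |` (D - A)) = D - A" by (auto simp: D_def)
      then have "(\<Sum>i\<in>A. T i A) = dder F (\<sigma> |` A) * G (\<sigma> |` (D - A))"
        and "(\<Sum>i\<in>D - A. T i A) = F (\<sigma> |` A) * dder G (\<sigma> |` (D - A))"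
        unfolding dder_def sum_distrib_left sum_distrib_right
        by (auto simp: T_def restrict_map_upd_in restrict_map_upd_notin intro!: sum.cong)
      moreover have "(\<Sum>i\<in>D. T i A) = (\<Sum>i\<in>A. T i A) + (\<Sum>i\<in>D - A. T i A)"
        using fin AD by (metis sum.subset_diff add.commute)
      ultimately show "(\<Sum>i\<in>D. T i A) =
          dder F (\<sigma> |` A) * G (\<sigma> |` (D - A)) + F (\<sigma> |` A) * dder G (\<sigma> |` (D - A))"
        by simp
    qed
  qed
  finally show "dder (dmul F G) \<sigma> = (dmul (dder F) G + dmul F (dder G)) \<sigma>" .
qed

fun gd_ops :: "gdop \<Rightarrow> (dmon \<Rightarrow> 'k::comm_ring_1) \<Rightarrow> (dmon \<Rightarrow> 'k) \<Rightarrow> dmon \<Rightarrow> 'k" where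
  "gd_ops GStar F G = dmul F G"
| "gd_ops Star F G = dmul (dder F) G"

lemma bilinear_op_gd_ops: "bilinear_op dscale (gd_ops g)"
  using module_dscale
  by (cases g) (auto simp: bilinear_op_def module_hom_iff dmul_add_left dmul_add_right
      dmul_scale_left dmul_scale_right dder_add dder_scale)

lemma evalp_gd_rels:
  assumes "p \<in> gd_rels"
  shows "evalp dscale gd_ops b p = (0 :: dmon \<Rightarrow> 'k::comm_ring_1)"
proof -
  interpret module "dscale :: 'k \<Rightarrow> _" by (rule module_dscale)
  have "dscale 1 F = F" "dscale (-1) F = - F" for F :: "dmon \<Rightarrow> 'k"
    by (auto simp: dscale_def fun_eq_iff)
  then show ?thesis
    using assms unfolding gd_rels_def evalp_eq_lin_ext
    by (auto simp: lin_ext_lin dder_dmul dmul_add_left dmul_add_right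
        dmul_assoc dmul_commute dmul_left_commute algebra_simps)
qed

lemma evalp_gd_consq:
  assumes "r \<in> consq gd_rels"
  shows "evalp dscale gd_ops b r = (0 :: dmon \<Rightarrow> 'k::comm_ring_1)"
proof -
  interpret module "dscale :: 'k \<Rightarrow> _" by (rule module_dscale)
  show ?thesis
    by (rule evalp_consq_eq_0[OF bilinear_op_gd_ops assms])
      (auto simp: gd_rels_def finite_support_lin evalp_gd_rels)
qed

lemma restrict_map_add_complement: "\<sigma> |` A ++ \<sigma> |` (dom \<sigma> - A) = \<sigma>"
  by (auto simp: fun_eq_iff map_add_def restrict_map_def split: option.splits)

lemma restrict_map_add_left: "dom \<sigma> \<inter> dom \<tau> = {} \<Longrightarrow> (\<sigma> ++ \<tau>) |` dom \<sigma> = \<sigma>"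
  by (auto simp: fun_eq_iff restrict_map_def map_add_def split: option.splits)

lemma restrict_map_add_right: "(\<sigma> ++ \<tau>) |` dom \<tau> = \<tau>"
  by (auto simp: fun_eq_iff restrict_map_def map_add_def split: option.splits)

lemma dmul_nonzero_split:
  assumes "dmul F G \<sigma> \<noteq> 0"
  obtains A where "A \<subseteq> dom \<sigma>" "F (\<sigma> |` A) \<noteq> 0" "G (\<sigma> |` (dom \<sigma> - A)) \<noteq> 0"
proof -
  have "(\<Sum>A\<in>Pow (dom \<sigma>). F (\<sigma> |` A) * G (\<sigma> |` (dom \<sigma> - A))) \<noteq> 0"
    using assms by (simp add: dmul_def)
  then obtain A where "A \<in> Pow (dom \<sigma>)" "F (\<sigma> |` A) * G (\<sigma> |` (dom \<sigma> - A)) \<noteq> 0"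
    by (rule sum.not_neutral_contains_not_neutral)
  then show thesis using that by (metis PowD mult_zero_left mult_zero_right)
qed

lemma dder_nonzero_split:
  assumes "dder F \<sigma> \<noteq> 0"
  obtains i k where "\<sigma> i = Some (Suc k)" "F (\<sigma>(i \<mapsto> k)) \<noteq> 0"
proof -
  have "(\<Sum>i\<in>dom \<sigma>. if \<sigma> i = Some 0 then 0 else F (\<sigma>(i \<mapsto> the (\<sigma> i) - 1))) \<noteq> 0"
    using assms by (simp add: dder_def)
  then obtain i where "i \<in> dom \<sigma>" and nz: "(if \<sigma> i = Some 0 then 0 else F (\<sigma>(i \<mapsto> the (\<sigma> i) - 1))) \<noteq> 0"
    by (rule sum.not_neutral_contains_not_neutral)
  then obtain j where j: "\<sigma> i = Some j" by blast
  with nz have "j \<noteq> 0" "F (\<sigma>(i \<mapsto> j - 1)) \<noteq> 0" by (auto split: if_splits)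
  then show thesis using that[of i "j - 1"] j by simp
qed

lemma support_dmul_subset:
  "{\<rho>. dmul F G \<rho> \<noteq> 0} \<subseteq> (\<lambda>(\<sigma>, \<tau>). \<sigma> ++ \<tau>) ` ({\<sigma>. F \<sigma> \<noteq> 0} \<times> {\<tau>. G \<tau> \<noteq> 0})"
proof
  fix \<rho> assume "\<rho> \<in> {\<rho>. dmul F G \<rho> \<noteq> 0}"
  then obtain A where "F (\<rho> |` A) \<noteq> 0" "G (\<rho> |` (dom \<rho> - A)) \<noteq> 0"
    using dmul_nonzero_split by blast
  then show "\<rho> \<in> (\<lambda>(\<sigma>, \<tau>). \<sigma> ++ \<tau>) ` ({\<sigma>. F \<sigma> \<noteq> 0} \<times> {\<tau>. G \<tau> \<noteq> 0})"
    by (auto intro!: image_eqI[of _ _ "(\<rho> |` A, \<rho> |` (dom \<rho> - A))"]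
        simp: restrict_map_add_complement)
qed

lemma support_dder_subset:
  "{\<rho>. dder F \<rho> \<noteq> 0} \<subseteq> (\<lambda>(\<sigma>, i). \<sigma>(i \<mapsto> Suc (the (\<sigma> i)))) ` Sigma {\<sigma>. F \<sigma> \<noteq> 0} dom"
proof
  fix \<rho> assume "\<rho> \<in> {\<rho>. dder F \<rho> \<noteq> 0}"
  then obtain i k where "\<rho> i = Some (Suc k)" "F (\<rho>(i \<mapsto> k)) \<noteq> 0"
    using dder_nonzero_split by blast
  then show "\<rho> \<in> (\<lambda>(\<sigma>, i). \<sigma>(i \<mapsto> Suc (the (\<sigma> i)))) ` Sigma {\<sigma>. F \<sigma> \<noteq> 0} dom"
    by (auto intro!: image_eqI[of _ _ "(\<rho>(i \<mapsto> k), i)"] simp: fun_upd_idem)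
qed

lemma dom_support_dmul:
  assumes "\<And>\<sigma>. F \<sigma> \<noteq> 0 \<Longrightarrow> dom \<sigma> = L" "\<And>\<sigma>. G \<sigma> \<noteq> 0 \<Longrightarrow> dom \<sigma> = R"
    and "dmul F G \<sigma> \<noteq> 0"
  shows "dom \<sigma> = L \<union> R"
proof -
  obtain A where A: "A \<subseteq> dom \<sigma>" "F (\<sigma> |` A) \<noteq> 0" "G (\<sigma> |` (dom \<sigma> - A)) \<noteq> 0"
    using dmul_nonzero_split[OF assms(3)] .
  have "dom (\<sigma> |` A) = L" "dom (\<sigma> |` (dom \<sigma> - A)) = R"
    using assms(1)[OF A(2)] assms(2)[OF A(3)] .
  then have "A = L" "dom \<sigma> - A = R"
    using A(1) by (simp_all add: Int_absorb1)
  then show ?thesis using A(1) by blast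
qed

lemma dom_support_dder:
  assumes "\<And>\<sigma>. F \<sigma> \<noteq> 0 \<Longrightarrow> dom \<sigma> = L" and "dder F \<sigma> \<noteq> 0"
  shows "dom \<sigma> = L"
proof -
  obtain i k where "\<sigma> i = Some (Suc k)" "F (\<sigma>(i \<mapsto> k)) \<noteq> 0"
    using dder_nonzero_split[OF assms(2)] .
  then have "dom \<sigma> = dom (\<sigma>(i \<mapsto> k))" by auto
  also have "\<dots> = L" by (rule assms(1)) fact
  finally show ?thesis .
qed

lemma finite_support_dmul:
  "finite {\<sigma>. F \<sigma> \<noteq> 0} \<Longrightarrow> finite {\<sigma>. G \<sigma> \<noteq> 0} \<Longrightarrow> finite {\<sigma>. dmul F G \<sigma> \<noteq> 0}"
  by (rule finite_subset[OF support_dmul_subset]) simp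

lemma finite_support_dder:
  assumes "finite {\<sigma>. F \<sigma> \<noteq> 0}" "\<And>\<sigma>. F \<sigma> \<noteq> 0 \<Longrightarrow> finite (dom \<sigma>)"
  shows "finite {\<sigma>. dder F \<sigma> \<noteq> 0}"
  by (rule finite_subset[OF support_dder_subset]) (use assms in \<open>auto intro: finite_SigmaI\<close>)

lemma dmul_map_add:
  assumes F: "\<And>\<rho>. F \<rho> \<noteq> 0 \<Longrightarrow> dom \<rho> = dom \<sigma>"
    and "finite (dom \<sigma>)" "finite (dom \<tau>)" "dom \<sigma> \<inter> dom \<tau> = {}"
  shows "dmul F G (\<sigma> ++ \<tau>) = F \<sigma> * G \<tau>"
proof -
  let ?D = "dom (\<sigma> ++ \<tau>)"
  let ?g = "\<lambda>A. F ((\<sigma> ++ \<tau>) |` A) * G ((\<sigma> ++ \<tau>) |` (?D - A))"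
  have "dmul F G (\<sigma> ++ \<tau>) = ?g (dom \<sigma>) + (\<Sum>A\<in>Pow ?D - {dom \<sigma>}. ?g A)"
    unfolding dmul_def by (rule sum.remove) (use assms(2,3) in auto)
  moreover have "?g A = 0" if "A \<in> Pow ?D - {dom \<sigma>}" for A
  proof -
    have "dom ((\<sigma> ++ \<tau>) |` A) = A" using that by (simp add: Int_absorb1)
    then have "F ((\<sigma> ++ \<tau>) |` A) = 0" using F that by blast
    then show ?thesis by simp
  qed
  moreover have "?D - dom \<sigma> = dom \<tau>" using assms(4) by auto
  ultimately show ?thesis by (simp add: restrict_map_add_left[OF assms(4)] restrict_map_add_right)
qed

context module
begin

lemma lin_ext_dmul:
  assumes F: "\<And>\<sigma>. F \<sigma> \<noteq> 0 \<Longrightarrow> dom \<sigma> = L" and G: "\<And>\<tau>. G \<tau> \<noteq> 0 \<Longrightarrow> dom \<tau> = R"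
    and "finite L" "finite R" "L \<inter> R = {}"
    and finF: "finite {\<sigma>. F \<sigma> \<noteq> 0}" and finG: "finite {\<tau>. G \<tau> \<noteq> 0}"
  shows "lin_ext scale h (dmul F G) =
    (\<Sum>(\<sigma>, \<tau>)\<in>{\<sigma>. F \<sigma> \<noteq> 0} \<times> {\<tau>. G \<tau> \<noteq> 0}. scale (F \<sigma> * G \<tau>) (h (\<sigma> ++ \<tau>)))"
proof -
  let ?P = "{\<sigma>. F \<sigma> \<noteq> 0} \<times> {\<tau>. G \<tau> \<noteq> 0}"
  have disj: "dom \<sigma> \<inter> dom \<tau> = {}" if "(\<sigma>, \<tau>) \<in> ?P" for \<sigma> \<tau>
    using that F G assms(5) by auto
  have inj: "inj_on (\<lambda>(\<sigma>, \<tau>). \<sigma> ++ \<tau>) ?P"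
  proof (rule inj_onI)
    fix x y assume "x \<in> ?P" "y \<in> ?P" and "(\<lambda>(\<sigma>, \<tau>). \<sigma> ++ \<tau>) x = (\<lambda>(\<sigma>, \<tau>). \<sigma> ++ \<tau>) y"
    moreover obtain \<sigma> \<tau> \<sigma>' \<tau>' where "x = (\<sigma>, \<tau>)" "y = (\<sigma>', \<tau>')" by force
    ultimately have P: "(\<sigma>, \<tau>) \<in> ?P" "(\<sigma>', \<tau>') \<in> ?P" and eq: "\<sigma> ++ \<tau> = \<sigma>' ++ \<tau>'"
      by auto
    have "dom \<sigma> = dom \<sigma>'" "dom \<tau> = dom \<tau>'" using P F G by auto
    then show "x = y" unfolding \<open>x = (\<sigma>, \<tau>)\<close> \<open>y = (\<sigma>', \<tau>')\<close>
      using eq restrict_map_add_left[OF disj[OF P(1)]] restrict_map_add_left[OF disj[OF P(2)]]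
        restrict_map_add_right[of \<sigma> \<tau>] restrict_map_add_right[of \<sigma>' \<tau>'] by metis
  qed
  have mul: "dmul F G (\<sigma> ++ \<tau>) = F \<sigma> * G \<tau>" if "(\<sigma>, \<tau>) \<in> ?P" for \<sigma> \<tau>
    using that F G assms(3,4) disj[OF that] by (intro dmul_map_add) auto
  have "lin_ext scale h (dmul F G) = (\<Sum>\<rho>\<in>(\<lambda>(\<sigma>, \<tau>). \<sigma> ++ \<tau>) ` ?P. scale (dmul F G \<rho>) (h \<rho>))"
    by (rule lin_ext_superset[OF _ support_dmul_subset]) (use finF finG in simp)
  also have "\<dots> = (\<Sum>(\<sigma>, \<tau>)\<in>?P. scale (dmul F G (\<sigma> ++ \<tau>)) (h (\<sigma> ++ \<tau>)))"
    by (subst sum.reindex[OF inj]) (simp add: case_prod_unfold)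
  also have "\<dots> = (\<Sum>(\<sigma>, \<tau>)\<in>?P. scale (F \<sigma> * G \<tau>) (h (\<sigma> ++ \<tau>)))"
    by (rule sum.cong) (auto simp: mul)
  finally show ?thesis .
qed

lemma lin_ext_dder:
  assumes fin: "finite {\<sigma>. F \<sigma> \<noteq> 0}" and fin_dom: "\<And>\<sigma>. F \<sigma> \<noteq> 0 \<Longrightarrow> finite (dom \<sigma>)"
  shows "lin_ext scale h (dder F) =
    (\<Sum>(\<sigma>, i)\<in>Sigma {\<sigma>. F \<sigma> \<noteq> 0} dom. scale (F \<sigma>) (h (\<sigma>(i \<mapsto> Suc (the (\<sigma> i))))))"
proof -
  define up :: "dmon \<times> nat \<Rightarrow> dmon \<times> nat" where "up = (\<lambda>(\<sigma>, i). (\<sigma>(i \<mapsto> Suc (the (\<sigma> i))), i))"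
  define down :: "dmon \<times> nat \<Rightarrow> dmon \<times> nat" where "down = (\<lambda>(\<rho>, i). (\<rho>(i \<mapsto> the (\<rho> i) - 1), i))"
  let ?S = "Sigma {\<sigma>. F \<sigma> \<noteq> 0} dom"
  let ?T = "(\<lambda>(\<sigma>, i). \<sigma>(i \<mapsto> Suc (the (\<sigma> i)))) ` ?S"
  let ?c = "\<lambda>(\<rho>, i). if \<rho> i = Some 0 then 0 else F (\<rho>(i \<mapsto> the (\<rho> i) - 1))"
  let ?Z = "{(\<rho>, i)\<in>Sigma ?T dom. ?c (\<rho>, i) = 0}"
  have finS: "finite ?S" using fin fin_dom by (rule finite_SigmaI) simp
  have finT: "finite ?T" "\<And>\<rho>. \<rho> \<in> ?T \<Longrightarrow> finite (dom \<rho>)"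
    using finS fin_dom by auto
  have "lin_ext scale h (dder F) = (\<Sum>\<rho>\<in>?T. \<Sum>i\<in>dom \<rho>. scale (?c (\<rho>, i)) (h \<rho>))"
    by (subst lin_ext_superset[OF finT(1) support_dder_subset]) (simp add: dder_def scale_sum_left)
  also have "\<dots> = (\<Sum>(\<rho>, i)\<in>Sigma ?T dom. scale (?c (\<rho>, i)) (h \<rho>))"
    using finT by (subst sum.Sigma) auto
  also have "\<dots> = (\<Sum>(\<sigma>, i)\<in>?S. scale (F \<sigma>) (h (\<sigma>(i \<mapsto> Suc (the (\<sigma> i))))))"
  proof (rule sum.reindex_bij_witness_not_neutral[symmetric, where S' = "{}" and T' = ?Z
        and j = up and i = down])
    show "finite ?Z"
      by (rule finite_subset[of _ "Sigma ?T dom"]) (use finT in \<open>blast intro: finite_SigmaI\<close>)+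
  next
    fix x assume "x \<in> ?S - {}"
    then obtain \<sigma> i k where x: "x = (\<sigma>, i)" "F \<sigma> \<noteq> 0" "\<sigma> i = Some k" by auto
    then show "down (up x) = x" "up x \<in> Sigma ?T dom - ?Z"
      by (auto simp: up_def down_def fun_upd_idem intro!: image_eqI[of _ _ "(\<sigma>, i)"])
  next
    fix y assume "y \<in> Sigma ?T dom - ?Z"
    then obtain \<rho> i j where y: "y = (\<rho>, i)" "\<rho> i = Some j" "?c (\<rho>, i) \<noteq> 0"
      by blast
    then have "j \<noteq> 0" "F (\<rho>(i \<mapsto> j - 1)) \<noteq> 0" by (auto split: if_splits)
    with y show "up (down y) = y" "down y \<in> ?S - {}"
      by (simp_all add: up_def down_def fun_upd_idem)
  next
    fix x assume "x \<in> ?S"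
    then obtain \<sigma> i k where "x = (\<sigma>, i)" "\<sigma> i = Some k" by auto
    then show "(\<lambda>(\<rho>, i). scale (?c (\<rho>, i)) (h \<rho>)) (up x) =
        (\<lambda>(\<sigma>, i). scale (F \<sigma>) (h (\<sigma>(i \<mapsto> Suc (the (\<sigma> i)))))) x"
      by (simp add: up_def fun_upd_idem)
  qed (auto split: prod.splits if_splits)
  finally show ?thesis .
qed

end

definition gd_mon :: "gdop btree \<Rightarrow> dmon \<Rightarrow> 'k::comm_ring_1" where
  "gd_mon v = eval gd_ops (\<lambda>i. delta [i \<mapsto> 0]) v"

lemma gd_mon_simps [simp]:
  "gd_mon (Leaf i) = delta [i \<mapsto> 0]"
  "gd_mon (Node GStar l r) = dmul (gd_mon l) (gd_mon r)"
  "gd_mon (Node Star l r) = dmul (dder (gd_mon l)) (gd_mon r)"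
  by (simp_all add: gd_mon_def)

lemma dom_support_gd_mon: "(gd_mon v \<sigma> :: 'k::comm_ring_1) \<noteq> 0 \<Longrightarrow> dom \<sigma> = set (leaves v)"
proof (induction v arbitrary: \<sigma>)
  case (Leaf i)
  then have "\<sigma> = [i \<mapsto> 0]" by (simp add: delta_def split: if_splits)
  then show ?case by (auto split: if_splits)
next
  case (Node g l r)
  have l: "dom \<sigma> = set (leaves l)" if "gd_mon l \<sigma> \<noteq> (0::'k)" for \<sigma>
    using Node.IH(1) that .
  have r: "dom \<sigma> = set (leaves r)" if "gd_mon r \<sigma> \<noteq> (0::'k)" for \<sigma>
    using Node.IH(2) that .
  have l': "dom \<sigma> = set (leaves l)" if "dder (gd_mon l) \<sigma> \<noteq> (0::'k)" for \<sigma>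
    using l that by (rule dom_support_dder)
  show ?case
  proof (cases g)
    case GStar
    have "dom \<sigma> = set (leaves l) \<union> set (leaves r)"
      by (rule dom_support_dmul[where F = "gd_mon l" and G = "gd_mon r"])
        (use l r Node.prems GStar in auto)
    then show ?thesis by simp
  next
    case Star
    have "dom \<sigma> = set (leaves l) \<union> set (leaves r)"
      by (rule dom_support_dmul[where F = "dder (gd_mon l)" and G = "gd_mon r"])
        (use l' r Node.prems Star in auto)
    then show ?thesis by simp
  qed
qed

lemma finite_support_gd_mon: "finite {\<sigma>. (gd_mon v \<sigma> :: 'k::comm_ring_1) \<noteq> 0}"
proof (induction v)
  case (Leaf i)
  then show ?case by (simp add: delta_def)
next
  case (Node g l r)
  have "finite {\<sigma>. dder (gd_mon l) \<sigma> \<noteq> (0::'k)}"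
    by (rule finite_support_dder[OF Node.IH(1)]) (simp add: dom_support_gd_mon)
  then show ?case
    using Node.IH by (cases g) (auto intro: finite_support_dmul)
qed

section \<open>Pairing Var-monomials with the model of GD^!\<close>

definition dvals :: "('a \<Rightarrow> 'a) \<Rightarrow> (nat \<Rightarrow> 'a) \<Rightarrow> dmon \<Rightarrow> nat \<Rightarrow> 'a" where
  "dvals d a \<sigma> i = (d ^^ (case \<sigma> i of None \<Rightarrow> 0 | Some k \<Rightarrow> k)) (a i)"

definition pairing :: "('k \<Rightarrow> 'a \<Rightarrow> 'a) \<Rightarrow> ('a \<Rightarrow> 'a \<Rightarrow> 'a) \<Rightarrow> ('a \<Rightarrow> 'a) \<Rightarrow> (nat \<Rightarrow> 'a)
    \<Rightarrow> unit btree \<Rightarrow> (dmon \<Rightarrow> 'k::zero) \<Rightarrow> 'a::comm_monoid_add" where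
  "pairing sc m d a u F = lin_ext sc (\<lambda>\<sigma>. eval (\<lambda>_. m) (dvals d a \<sigma>) u) F"

lemma dvals_upd_Suc:
  "\<sigma> i = Some k \<Longrightarrow> dvals d a (\<sigma>(i \<mapsto> Suc k)) = (dvals d a \<sigma>)(i := d (dvals d a \<sigma> i))"
  by (auto simp: fun_eq_iff dvals_def)

lemma eval_dvals_cong:
  "(\<And>i. i \<in> set (leaves u) \<Longrightarrow> \<sigma> i = \<tau> i) \<Longrightarrow> eval ops (dvals d a \<sigma>) u = eval ops (dvals d a \<tau>) u"
  by (rule eval_cong_leaves) (simp add: dvals_def)

lemma leaves_var_part: "leaves (var_part t) = leaves t"
  by (induction t) auto

lemma set_leaves_gd_part: "set (leaves (gd_part t)) = set (leaves t)"
  by (induction t rule: gd_part.induct) auto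

lemma is_algebra_imp_module: "is_algebra sc m \<Longrightarrow> module sc"
  by (simp add: is_algebra_def module_iff_vector_space)

lemma is_algebra_imp_bilinear_op: "is_algebra sc m \<Longrightarrow> bilinear_op sc m"
  using is_algebra_imp_module by (simp add: is_algebra_def bilinear_op_def module_hom_iff)

lemma is_derivation_imp_module_hom: "is_algebra sc m \<Longrightarrow> is_derivation sc m d \<Longrightarrow> module_hom sc sc d"
  using is_algebra_imp_module by (simp add: is_derivation_def module_hom_iff)

context
  fixes sc :: "'k::field \<Rightarrow> 'a::ab_group_add \<Rightarrow> 'a" and m :: "'a \<Rightarrow> 'a \<Rightarrow> 'a"
    and d :: "'a \<Rightarrow> 'a" and a :: "nat \<Rightarrow> 'a"
  assumes alg: "is_algebra sc m" and der: "is_derivation sc m d"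
begin

lemma eval_derivation:
  "distinct (leaves u) \<Longrightarrow>
   d (eval (\<lambda>_. m) b u) = (\<Sum>i\<in>set (leaves u). eval (\<lambda>_. m) (b(i := d (b i))) u)"
proof (induction u)
  case (Leaf x)
  then show ?case by simp
next
  case (Node g l r)
  have dl: "distinct (leaves l)" and dr: "distinct (leaves r)"
    and disj: "set (leaves l) \<inter> set (leaves r) = {}" using Node.prems by auto
  have el: "eval (\<lambda>_. m) (b(i := y)) r = eval (\<lambda>_. m) b r" if "i \<in> set (leaves l)" for i y
    using that disj by (intro eval_upd_notin) auto
  have er: "eval (\<lambda>_. m) (b(i := y)) l = eval (\<lambda>_. m) b l" if "i \<in> set (leaves r)" for i y
    using that disj by (intro eval_upd_notin) auto
  have m_l: "module_hom sc sc (\<lambda>x. m x y)" and m_r: "module_hom sc sc (m y)" for y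
    using is_algebra_imp_bilinear_op[OF alg] by (auto simp: bilinear_op_def)
  have "d (eval (\<lambda>_. m) b (Node g l r)) =
      m (d (eval (\<lambda>_. m) b l)) (eval (\<lambda>_. m) b r) + m (eval (\<lambda>_. m) b l) (d (eval (\<lambda>_. m) b r))"
    using der by (simp add: is_derivation_def)
  also have "\<dots> = (\<Sum>i\<in>set (leaves l). eval (\<lambda>_. m) (b(i := d (b i))) (Node g l r)) +
      (\<Sum>i\<in>set (leaves r). eval (\<lambda>_. m) (b(i := d (b i))) (Node g l r))"
    unfolding Node.IH(1)[OF dl] Node.IH(2)[OF dr] module_hom.sum[OF m_l] module_hom.sum[OF m_r]
    by (simp only: eval.simps el er cong: sum.cong)
  also have "\<dots> = (\<Sum>i\<in>set (leaves (Node g l r)). eval (\<lambda>_. m) (b(i := d (b i))) (Node g l r))"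
    using disj by (simp add: sum.union_disjoint)
  finally show ?case .
qed

lemma pairing_Node:
  assumes F: "\<And>\<sigma>. F \<sigma> \<noteq> 0 \<Longrightarrow> dom \<sigma> = set (leaves ul)"
    and G: "\<And>\<tau>. G \<tau> \<noteq> 0 \<Longrightarrow> dom \<tau> = set (leaves ur)"
    and disj: "set (leaves ul) \<inter> set (leaves ur) = {}"
    and finF: "finite {\<sigma>. F \<sigma> \<noteq> 0}" and finG: "finite {\<tau>. G \<tau> \<noteq> 0}"
  shows "pairing sc m d a (Node () ul ur) (dmul F G) = m (pairing sc m d a ul F) (pairing sc m d a ur G)"
proof -
  interpret module sc by (rule is_algebra_imp_module[OF alg])
  let ?E = "\<lambda>u \<sigma>. eval (\<lambda>_. m) (dvals d a \<sigma>) u"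
  let ?P = "{\<sigma>. F \<sigma> \<noteq> 0} \<times> {\<tau>. G \<tau> \<noteq> 0}"
  have m_l: "module_hom sc sc (\<lambda>x. m x y)" and m_r: "module_hom sc sc (m y)" for y
    using is_algebra_imp_bilinear_op[OF alg] by (auto simp: bilinear_op_def)
  have E_add: "?E ul (\<sigma> ++ \<tau>) = ?E ul \<sigma>" "?E ur (\<sigma> ++ \<tau>) = ?E ur \<tau>"
    if "F \<sigma> \<noteq> 0" "G \<tau> \<noteq> 0" for \<sigma> \<tau>
  proof -
    have "dom \<sigma> = set (leaves ul)" "dom \<tau> = set (leaves ur)" using that F G by auto
    then show "?E ul (\<sigma> ++ \<tau>) = ?E ul \<sigma>" "?E ur (\<sigma> ++ \<tau>) = ?E ur \<tau>"
      using disj by (auto intro!: eval_dvals_cong simp: map_add_dom_app_simps(1,3) disjoint_iff)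
  qed
  have "m (pairing sc m d a ul F) (pairing sc m d a ur G) =
      lin_ext sc (\<lambda>\<sigma>. lin_ext sc (\<lambda>\<tau>. m (?E ul \<sigma>) (?E ur \<tau>)) G) F"
    unfolding pairing_def by (subst module_hom_lin_ext[OF m_l]) (simp only: module_hom_lin_ext[OF m_r])
  also have "\<dots> = (\<Sum>(\<sigma>, \<tau>)\<in>?P. sc (F \<sigma> * G \<tau>) (m (?E ul \<sigma>) (?E ur \<tau>)))"
    by (simp add: lin_ext_def scale_sum_right sum.cartesian_product)
  also have "\<dots> = (\<Sum>(\<sigma>, \<tau>)\<in>?P. sc (F \<sigma> * G \<tau>) (?E (Node () ul ur) (\<sigma> ++ \<tau>)))"
    by (rule sum.cong) (auto simp: E_add)
  also have "\<dots> = pairing sc m d a (Node () ul ur) (dmul F G)"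
    unfolding pairing_def by (rule lin_ext_dmul[symmetric]) (use F G disj finF finG in auto)
  finally show ?thesis ..
qed

lemma pairing_dder:
  assumes dist: "distinct (leaves u)" and F: "\<And>\<sigma>. F \<sigma> \<noteq> 0 \<Longrightarrow> dom \<sigma> = set (leaves u)"
    and fin: "finite {\<sigma>. F \<sigma> \<noteq> 0}"
  shows "d (pairing sc m d a u F) = pairing sc m d a u (dder F)"
proof -
  interpret module sc by (rule is_algebra_imp_module[OF alg])
  let ?E = "\<lambda>\<sigma>. eval (\<lambda>_. m) (dvals d a \<sigma>) u"
  have "d (pairing sc m d a u F) = lin_ext sc (\<lambda>\<sigma>. d (?E \<sigma>)) F"
    unfolding pairing_def by (rule module_hom_lin_ext[OF is_derivation_imp_module_hom[OF alg der]])
  also have "\<dots> = lin_ext sc (\<lambda>\<sigma>. \<Sum>i\<in>dom \<sigma>. ?E (\<sigma>(i \<mapsto> Suc (the (\<sigma> i))))) F"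
  proof (rule lin_ext_cong)
    fix \<sigma> assume "F \<sigma> \<noteq> 0"
    then have "dom \<sigma> = set (leaves u)" by (rule F)
    moreover have "dvals d a (\<sigma>(i \<mapsto> Suc (the (\<sigma> i)))) = (dvals d a \<sigma>)(i := d (dvals d a \<sigma> i))"
      if "i \<in> dom \<sigma>" for i
      using that by (intro dvals_upd_Suc) auto
    ultimately show "d (?E \<sigma>) = (\<Sum>i\<in>dom \<sigma>. ?E (\<sigma>(i \<mapsto> Suc (the (\<sigma> i)))))"
      by (simp add: eval_derivation[OF dist])
  qed
  also have "\<dots> = (\<Sum>(\<sigma>, i)\<in>Sigma {\<sigma>. F \<sigma> \<noteq> 0} dom. sc (F \<sigma>) (?E (\<sigma>(i \<mapsto> Suc (the (\<sigma> i))))))"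
    unfolding lin_ext_def scale_sum_right by (rule sum.Sigma) (use fin F in auto)
  also have "\<dots> = pairing sc m d a u (dder F)"
    unfolding pairing_def by (rule lin_ext_dder[symmetric]) (use fin F in auto)
  finally show ?thesis .
qed

lemma pairing_monomial:
  "distinct (leaves t) \<Longrightarrow> pairing sc m d a (var_part t) (gd_mon (gd_part t)) = eval (dstar_ops m d) a t"
proof (induction t)
  case (Leaf i)
  interpret module sc by (rule is_algebra_imp_module[OF alg])
  show ?case
    unfolding pairing_def by (subst lin_ext_superset[of "{[i \<mapsto> 0]}"]) (auto simp: delta_def dvals_def)
next
  case (Node g l r)
  let ?P = "pairing sc m d a" and ?F = "\<lambda>t. gd_mon (gd_part t) :: dmon \<Rightarrow> 'k"
  have dist: "distinct (leaves (var_part l))" "distinct (leaves (var_part r))"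
    and disj: "set (leaves (var_part l)) \<inter> set (leaves (var_part r)) = {}"
    using Node.prems by (auto simp: leaves_var_part)
  have IH: "?P (var_part l) (?F l) = eval (dstar_ops m d) a l"
    "?P (var_part r) (?F r) = eval (dstar_ops m d) a r"
    using Node by auto
  have dom: "dom \<sigma> = set (leaves (var_part t))" if "?F t \<sigma> \<noteq> 0" for t \<sigma>
    using dom_support_gd_mon[OF that] by (simp add: leaves_var_part set_leaves_gd_part)
  have dom': "dom \<sigma> = set (leaves (var_part t))" if "dder (?F t) \<sigma> \<noteq> 0" for t \<sigma>
    using dom that by (rule dom_support_dder)
  have fin: "finite {\<sigma>. ?F t \<sigma> \<noteq> 0}" for t
    by (rule finite_support_gd_mon)
  have fin': "finite {\<sigma>. dder (?F t) \<sigma> \<noteq> 0}" for t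
    using fin by (rule finite_support_dder) (simp add: dom)
  have pairing_dder_gd: "?P (var_part t) (dder (?F t)) = d (?P (var_part t) (?F t))"
    if "distinct (leaves (var_part t))" for t
    using that dom fin by (rule pairing_dder[symmetric])
  show ?case
  proof (cases g)
    case Dot
    then show ?thesis
      using pairing_Node[OF dom dom disj fin fin] IH by simp
  next
    case Succ
    then show ?thesis
      using pairing_Node[OF dom' dom disj fin' fin] IH pairing_dder_gd[OF dist(1)] by simp
  next
    case Prec
    then show ?thesis
      using pairing_Node[OF dom dom' disj fin fin'] IH pairing_dder_gd[OF dist(2)] by (simp add: dmul_commute)
  qed
qed

lemma lin_ext_pairing_var_consq:
  assumes fin: "\<And>p. p \<in> S \<Longrightarrow> finite {t. p t \<noteq> 0}" and var: "in_variety S sc m"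
    and r: "r \<in> consq S"
  shows "lin_ext sc (\<lambda>u. pairing sc m d a u F) r = 0"
proof -
  interpret module sc by (rule is_algebra_imp_module[OF alg])
  have "lin_ext sc (eval (\<lambda>_. m) (dvals d a \<sigma>)) r = 0" for \<sigma>
    unfolding evalp_eq_lin_ext[symmetric]
    by (rule evalp_consq_eq_0[OF _ r]) (use is_algebra_imp_bilinear_op[OF alg] fin var in \<open>auto simp: in_variety_def\<close>)
  then show ?thesis
    unfolding pairing_def lin_ext_swap[of _ F] by (simp add: lin_ext_def)
qed

lemma lin_ext_pairing_gd_consq:
  assumes r: "r \<in> consq gd_rels"
  shows "lin_ext sc (\<lambda>v. pairing sc m d a u (gd_mon v)) r = 0"
proof -
  interpret module sc by (rule is_algebra_imp_module[OF alg])
  have fin: "finite {v. r v \<noteq> 0}"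
    using r by (rule finite_support_consq[rotated]) (auto simp: gd_rels_def finite_support_lin)
  have "(\<Sum>v | r v \<noteq> 0. r v * gd_mon v \<sigma>) = evalp dscale gd_ops (\<lambda>i. delta [i \<mapsto> 0]) r \<sigma>" for \<sigma>
    by (simp add: evalp_def sum_fun_apply dscale_def gd_mon_def)
  then show ?thesis
    unfolding pairing_def lin_ext_lin_ext_coeffs[OF fin finite_support_gd_mon]
    by (simp add: evalp_gd_consq[OF r] lin_ext_def)
qed

lemma lin_ext_pairing_hadamard_kernel:
  assumes fin: "\<And>p. p \<in> S \<Longrightarrow> finite {t. p t \<noteq> 0}" and var: "in_variety S sc m"
    and Q: "Q \<in> hadamard_kernel S"
  shows "lin_ext sc (\<lambda>(u, v). pairing sc m d a u (gd_mon v)) Q = 0"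
proof -
  interpret module sc by (rule is_algebra_imp_module[OF alg])
  have fin_gd: "finite {t. r t \<noteq> 0}" if "r \<in> consq gd_rels" for r
    using that by (rule finite_support_consq[rotated]) (auto simp: gd_rels_def finite_support_lin)
  have "finite {t. Q t \<noteq> 0} \<and> lin_ext sc (\<lambda>(u, v). pairing sc m d a u (gd_mon v)) Q = 0"
    using Q unfolding hadamard_kernel_def
  proof (rule lin_ext_lspan_eq_0[rotated])
    fix b assume "b \<in> {tens r (delta w) |r w. r \<in> consq S} \<union> {tens (delta w) r |r w. r \<in> consq gd_rels}"
    then show "finite {t. b t \<noteq> 0} \<and> lin_ext sc (\<lambda>(u, v). pairing sc m d a u (gd_mon v)) b = 0"
    proof (elim UnE CollectE exE conjE)
      fix r w assume "b = tens r (delta w)" "r \<in> consq S"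
      then show ?thesis
        using finite_support_consq[OF fin] lin_ext_pairing_var_consq[OF fin var]
        by (simp add: finite_support_tens finite_support_delta lin_ext_tens_delta_right)
    next
      fix r w assume "b = tens (delta w) r" and r: "r \<in> consq gd_rels"
      then show ?thesis
        using fin_gd[OF r] lin_ext_pairing_gd_consq[OF r]
        by (simp add: finite_support_tens finite_support_delta lin_ext_tens_delta_left)
    qed
  qed
  then show ?thesis ..
qed

end

theorem mainTheorem11:
  fixes S :: "(unit btree \<Rightarrow> 'k::field) set"
    and f :: "op3 btree \<Rightarrow> 'k"
    and n :: nat
    and sc :: "'k \<Rightarrow> 'a::ab_group_add \<Rightarrow> 'a"
    and m :: "'a \<Rightarrow> 'a \<Rightarrow> 'a"
    and d :: "'a \<Rightarrow> 'a"
    and a :: "nat \<Rightarrow> 'a"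
  assumes S_multilinear: "\<forall>p\<in>S. \<exists>k. multilin k p"
    and f_multilinear: "multilin n f"
    and f_identity: "white_identity S f"
    and A_in_Var: "in_variety S sc m"
    and d_derivation: "is_derivation sc m d"
  shows "evalp sc (dstar_ops m d) a f = 0"
proof -
  have alg: "is_algebra sc m" using A_in_Var by (simp add: in_variety_def)
  interpret module sc by (rule is_algebra_imp_module[OF alg])
  have fin_S: "\<And>p. p \<in> S \<Longrightarrow> finite {t. p t \<noteq> 0}" and fin_f: "finite {t. f t \<noteq> 0}"
    using S_multilinear f_multilinear unfolding multilin_def by blast+
  have "evalp sc (dstar_ops m d) a f =
      lin_ext sc (\<lambda>t. pairing sc m d a (var_part t) (gd_mon (gd_part t))) f"
    unfolding evalp_eq_lin_ext
    by (rule lin_ext_cong) (use f_multilinear pairing_monomial[OF alg d_derivation] in \<open>simp add: multilin_def\<close>)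
  also have "\<dots> = lin_ext sc (\<lambda>(u, v). pairing sc m d a u (gd_mon v)) (pmap (\<lambda>t. (var_part t, gd_part t)) f)"
    by (simp add: lin_ext_pmap[OF fin_f])
  also have "\<dots> = 0"
    by (rule lin_ext_pairing_hadamard_kernel[OF alg d_derivation fin_S A_in_Var f_identity[unfolded white_identity_def]])
  finally show ?thesis .
qed

end
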